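(* \[ \sum_{\substack{a\ge b,\ c\ge d\\ ad-bc=1}}\frac{1}{(ac+bd)\big(a(a+c)+b(b+d)\big)\big((a+c)c+(b+d)d\big)}=1-\frac{\pi}{4}, \] where the sum is over all nonnegative integers $a,b,c,d$ with $a\ge b$, $c\ge d$ and $ad-bc=1$. *)

theory Defs
  imports "HOL-Analysis.Analysis"
begin

end

theory Submission
  imports Defs
begin

(* The admissible quadruples form a binary tree with root (1,0,1,1) in which (a,b,c,d) has the
   children (a,b,a+c,b+d) and (a+c,b+d,c,d); every admissible quadruple occurs exactly once,
   because in the coordinates (a-b,b,c-d,d) it is a matrix of SL2(N), whose rows are comparable
   unless it is the identity.  Let p = ac+bd at a node and q, r the same quantity at its two
   children.  Lagrange's identity (a^2+b^2)(c^2+d^2) = (ac+bd)^2 + (ad-bc)^2 gives qr = p(q+r) + 1,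
   so the summand 1/(pqr) equals 1/p - 1/q - 1/r and arctan(1/p) = arctan(1/q) + arctan(1/r).
   Summed over the first n levels of the tree the series telescopes to 1 - H n, where H n is the
   sum of 1/p over level n, whereas the sum of arctan(1/p) over every level is arctan 1 = pi/4.
   Since p > n on level n and x - arctan x <= x^2, we get 0 <= H n - pi/4 <= H n/(n+1) <= 1/(n+1).
   As the summands are nonnegative, summing level by level yields the unordered sum. *)

lemma reciprocal_product_telescope:
  fixes p q r :: real
  assumes "q * r = p * (q + r) + 1" "p \<noteq> 0" "q \<noteq> 0" "r \<noteq> 0"
  shows "1 / (p * q * r) = 1 / p - 1 / q - 1 / r"
  using assms by (simp add: field_simps)

lemma arctan_reciprocal_split:
  fixes p q r :: real
  assumes "q * r = p * (q + r) + 1" "1 \<le> q" "1 < r"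
  shows "arctan (1 / p) = arctan (1 / q) + arctan (1 / r)"
proof -
  have "1 * r \<le> q * r"
    using assms by (intro mult_right_mono) auto
  then have qr: "q * r - 1 = p * (q + r)" "0 < q * r - 1"
    using assms by linarith+
  have "arctan (1 / q) + arctan (1 / r) = arctan ((1 / q + 1 / r) / (1 - 1 / q * (1 / r)))"
    using assms by (intro arctan_add) auto
  also have "(1 / q + 1 / r) / (1 - 1 / q * (1 / r)) = (q + r) / (q * r - 1)"
    using assms(2,3) qr(2) by (simp add: field_simps)
  also have "\<dots> = 1 / p"
    using qr assms(2,3) by auto
  finally show ?thesis by simp
qed

lemma diff_arctan_le_square:
  fixes x :: real
  assumes "0 \<le> x"
  shows "x - arctan x \<le> x\<^sup>2"
proof (cases "x < 1")
  case True
  have "x - x ^ 3 / 3 \<le> arctan x"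
    using arctan_lower_bound[OF assms True, of 1] by (simp add: numeral_2_eq_2 power3_eq_cube)
  moreover have "x ^ 3 \<le> x\<^sup>2"
    using assms True by (simp add: power3_eq_cube power2_eq_square mult_left_le)
  moreover have "0 \<le> x ^ 3" using assms by simp
  ultimately show ?thesis by linarith
next
  case False
  then have "x \<le> x\<^sup>2" by (simp add: power2_eq_square)
  moreover have "0 \<le> arctan x" using assms by simp
  ultimately show ?thesis by linarith
qed

lemma has_sum_Union_disjoint_nonneg:
  fixes f :: "'a \<Rightarrow> real" and B :: "nat \<Rightarrow> 'a set"
  assumes "\<And>k. finite (B k)" "disjoint_family B" "\<And>x. x \<in> (\<Union>k. B k) \<Longrightarrow> 0 \<le> f x"
    and "(\<lambda>k. sum f (B k)) sums s"
  shows "(f has_sum s) (\<Union>k. B k)"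
proof -
  have blocks: "((\<lambda>x. (f \<circ> snd) (k, x)) has_sum sum f (B k)) (B k)" for k
    using assms(1) by simp
  have outer: "((\<lambda>k. sum f (B k)) has_sum s) UNIV"
    using assms(3,4) by (intro sums_nonneg_imp_has_sum sum_nonneg) auto
  have "(f \<circ> snd) summable_on Sigma UNIV B"
  proof (rule summable_on_SigmaI[OF blocks])
    show "(\<lambda>k. sum f (B k)) summable_on UNIV"
      using outer by (auto simp: summable_on_def)
  qed (use assms(3) in auto)
  then have "((f \<circ> snd) has_sum s) (Sigma UNIV B)"
    by (rule has_sum_SigmaI[OF blocks outer])
  moreover have "inj_on snd (Sigma UNIV B)"
  proof (rule inj_onI, clarsimp)
    fix k m x assume "x \<in> B k" "x \<in> B m"
    then show "k = m"
      using assms(2) by (auto simp: disjoint_family_on_def)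
  qed
  ultimately have "(f has_sum s) (snd ` Sigma UNIV B)"
    by (simp add: has_sum_reindex)
  moreover have "snd ` Sigma UNIV B = (\<Union>k. B k)"
    by force
  ultimately show ?thesis
    by simp
qed

lemma SL2_nat_rows_comparable:
  fixes x y u v :: nat
  assumes det: "x * v = y * u + 1" and "(x, y, u, v) \<noteq> (1, 0, 0, 1)"
  shows "(x \<le> u \<and> y \<le> v) \<or> (u \<le> x \<and> v \<le> y)"
proof (rule ccontr)
  assume "\<not> ?thesis"
  then consider "u < x" "y < v" | "x < u" "v < y" by linarith
  then show False
  proof cases
    case 1
    then have "(u + 1) * (y + 1) \<le> x * v" by (intro mult_mono) auto
    then have "u = 0" "y = 0" using det by (auto simp: algebra_simps)
    then have "x = 1" "v = 1" using det by auto
    then show False using assms(2) \<open>u = 0\<close> \<open>y = 0\<close> by simp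
  next
    case 2
    then have "(x + 1) * (v + 1) \<le> u * y" by (intro mult_mono) auto
    then show False using det by (simp add: algebra_simps)
  qed
qed

type_synonym quad = "nat \<times> nat \<times> nat \<times> nat"

definition det_one_quads :: "quad set" where
  "det_one_quads = {(a, b, c, d). b \<le> a \<and> d \<le> c \<and> int a * int d - int b * int c = 1}"

fun left_child :: "quad \<Rightarrow> quad" where
  "left_child (a, b, c, d) = (a, b, a + c, b + d)"

fun right_child :: "quad \<Rightarrow> quad" where
  "right_child (a, b, c, d) = (a + c, b + d, c, d)"

fun level :: "nat \<Rightarrow> quad set" where
  "level 0 = {(1, 0, 1, 1)}"
| "level (Suc n) = left_child ` level n \<union> right_child ` level n"

fun row_inner :: "quad \<Rightarrow> nat" where
  "row_inner (a, b, c, d) = a * c + b * d"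

lemma mem_det_one_quads_iff:
  "(a, b, c, d) \<in> det_one_quads \<longleftrightarrow> b \<le> a \<and> d \<le> c \<and> a * d = b * c + 1"
proof -
  have "int a * int d - int b * int c = 1 \<longleftrightarrow> int (a * d) = int (b * c + 1)"
    by auto
  then show ?thesis
    unfolding det_one_quads_def of_nat_eq_iff by auto
qed

lemma det_one_quads_pos:
  assumes "(a, b, c, d) \<in> det_one_quads"
  shows "0 < a" "0 < c" "0 < d"
  using assms by (auto simp: mem_det_one_quads_iff intro!: Nat.gr0I)

lemma left_child_in_det_one_quads: "M \<in> det_one_quads \<Longrightarrow> left_child M \<in> det_one_quads"
  by (cases M) (auto simp: mem_det_one_quads_iff algebra_simps)

lemma right_child_in_det_one_quads: "M \<in> det_one_quads \<Longrightarrow> right_child M \<in> det_one_quads"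
  by (cases M) (auto simp: mem_det_one_quads_iff algebra_simps)

lemma level_subset_det_one_quads: "level n \<subseteq> det_one_quads"
proof (induction n)
  case 0
  show ?case by (simp add: mem_det_one_quads_iff)
next
  case (Suc n)
  then show ?case
    unfolding level.simps using left_child_in_det_one_quads right_child_in_det_one_quads by blast
qed

lemma finite_level: "finite (level n)"
  by (induction n) auto

lemma row_inner_pos: "M \<in> det_one_quads \<Longrightarrow> 0 < row_inner M"
  by (cases M) (auto dest: det_one_quads_pos)

lemma row_inner_lt_children:
  assumes "M \<in> det_one_quads"
  shows "row_inner M < row_inner (left_child M)" "row_inner M < row_inner (right_child M)"
  using assms by (cases M; auto simp: algebra_simps dest: det_one_quads_pos)+

lemma row_inner_level: "M \<in> level n \<Longrightarrow> n < row_inner M"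
proof (induction n arbitrary: M)
  case (Suc n)
  then obtain N where N: "N \<in> level n" and M: "M = left_child N \<or> M = right_child N"
    unfolding level.simps by blast
  have "N \<in> det_one_quads"
    using N level_subset_det_one_quads by blast
  then have "row_inner N < row_inner M"
    using M row_inner_lt_children by blast
  with Suc.IH[OF N] show ?case
    by simp
qed simp

lemma row_inner_children_identity:
  assumes "M \<in> det_one_quads"
  shows "real (row_inner (left_child M)) * real (row_inner (right_child M))
           = real (row_inner M) * (real (row_inner (left_child M)) + real (row_inner (right_child M))) + 1"
proof -
  obtain a b c d where M: "M = (a, b, c, d)" by (cases M)
  then have "a * d = b * c + 1"
    using assms by (simp add: mem_det_one_quads_iff)
  then have det: "real a * real d - real b * real c = 1"
    by (metis add_diff_cancel_left' of_nat_1 of_nat_add of_nat_mult)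
  have "real (row_inner (left_child M)) * real (row_inner (right_child M))
          = real (row_inner M) * (real (row_inner (left_child M)) + real (row_inner (right_child M)))
            + (real a * real d - real b * real c)\<^sup>2"
    unfolding M by (simp add: algebra_simps power2_eq_square)
  with det show ?thesis
    by simp
qed

lemma children_determine_parent:
  assumes "N \<in> det_one_quads" "N' \<in> det_one_quads"
    and "M \<in> {left_child N, right_child N}" "M \<in> {left_child N', right_child N'}"
  shows "N = N'"
  using assms by (cases N; cases N') (auto dest: det_one_quads_pos)

lemma left_child_neq_right_child:
  "M \<in> det_one_quads \<Longrightarrow> N \<in> det_one_quads \<Longrightarrow> left_child M \<noteq> right_child N"
  by (cases M; cases N) (auto dest: det_one_quads_pos)

lemma inj_on_left_child: "inj_on left_child A"
  by (auto simp: inj_on_def)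

lemma inj_on_right_child: "inj_on right_child A"
  by (auto simp: inj_on_def)

lemma root_notin_level_Suc: "(1, 0, 1, 1) \<notin> level (Suc n)"
proof -
  have "(1, 0, 1, 1) \<notin> {left_child N, right_child N}" if "N \<in> det_one_quads" for N
    using that by (cases N) (auto dest: det_one_quads_pos)
  then show ?thesis
    using level_subset_det_one_quads unfolding level.simps by blast
qed

lemma level_unique: "M \<in> level n \<Longrightarrow> M \<in> level m \<Longrightarrow> n = m"
proof (induction n arbitrary: M m)
  case 0
  then show ?case
    using root_notin_level_Suc by (cases m) auto
next
  case (Suc n)
  then obtain k where m: "m = Suc k"
    using root_notin_level_Suc by (cases m) auto
  obtain N where N: "N \<in> level n" "M \<in> {left_child N, right_child N}"
    using Suc.prems(1) unfolding level.simps by blast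
  obtain N' where N': "N' \<in> level k" "M \<in> {left_child N', right_child N'}"
    using Suc.prems(2) unfolding m level.simps by blast
  have "N = N'"
    using N N' level_subset_det_one_quads by (intro children_determine_parent) auto
  then show ?case
    using Suc.IH N N' m by blast
qed

lemma det_one_quads_has_parent:
  assumes "(a, b, c, d) \<in> det_one_quads" "(a, b, c, d) \<noteq> (1, 0, 1, 1)"
  shows "\<exists>N \<in> det_one_quads. (a, b, c, d) \<in> {left_child N, right_child N}"
proof -
  have Q: "b \<le> a" "d \<le> c" "a * d = b * c + 1"
    using assms(1) by (auto simp: mem_det_one_quads_iff)
  have "b * d \<le> b * c"
    using Q by simp
  then have "(a - b) * d = b * (c - d) + 1"
    using Q by (simp add: diff_mult_distrib diff_mult_distrib2 Suc_diff_le)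
  moreover have "(a - b, b, c - d, d) \<noteq> (1, 0, 0, 1)"
    using assms(2) Q by auto
  ultimately consider "a - b \<le> c - d" "b \<le> d" | "c - d \<le> a - b" "d \<le> b"
    using SL2_nat_rows_comparable by blast
  then show ?thesis
  proof cases
    case 1
    then have "a \<le> c"
      using Q by linarith
    then have "b * a \<le> b * c"
      by simp
    then have "(a, b, c - a, d - b) \<in> det_one_quads"
      using 1 Q by (simp add: mem_det_one_quads_iff diff_mult_distrib2 Suc_diff_le mult.commute[of a b])
    then show ?thesis
      using 1 Q by force
  next
    case 2
    then have "c \<le> a"
      using Q by linarith
    then have "d * c \<le> b * c"
      using 2 by simp
    then have "(a - c, b - d, c, d) \<in> det_one_quads"
      using 2 Q by (simp add: mem_det_one_quads_iff diff_mult_distrib Suc_diff_le mult.commute[of c d])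
    then show ?thesis
      using 2 Q by force
  qed
qed

lemma det_one_quads_eq_Union_level: "det_one_quads = (\<Union>n. level n)"
proof
  show "det_one_quads \<subseteq> (\<Union>n. level n)"
  proof
    fix M assume "M \<in> det_one_quads"
    then show "M \<in> (\<Union>n. level n)"
    proof (induction M rule: measure_induct_rule[where f = row_inner])
      case (less M)
      show ?case
      proof (cases "M = (1, 0, 1, 1)")
        case False
        then obtain N where N: "N \<in> det_one_quads" "M \<in> {left_child N, right_child N}"
          using det_one_quads_has_parent less.prems by (cases M) blast
        then have "row_inner N < row_inner M"
          using row_inner_lt_children by blast
        then obtain n where "N \<in> level n"
          using less.IH N(1) by blast
        then have "M \<in> level (Suc n)"
          using N(2) by auto
        then show ?thesis by blast
      qed (metis UNIV_I UN_I level.simps(1) singletonI)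
    qed
  qed
qed (use level_subset_det_one_quads in blast)

lemma sum_level_Suc:
  "sum \<phi> (level (Suc n)) = (\<Sum>M\<in>level n. \<phi> (left_child M) + \<phi> (right_child M))"
proof -
  have "left_child ` level n \<inter> right_child ` level n = {}"
    using level_subset_det_one_quads left_child_neq_right_child by blast
  then show ?thesis
    by (simp add: sum.union_disjoint finite_level sum.reindex inj_on_left_child inj_on_right_child
        sum.distrib)
qed

lemma sum_level_telescope:
  fixes \<phi> \<psi> :: "quad \<Rightarrow> 'a :: ab_group_add"
  assumes "\<And>M. M \<in> det_one_quads \<Longrightarrow> \<phi> (left_child M) + \<phi> (right_child M) = \<phi> M - \<psi> M"
  shows "sum \<phi> (level n) = \<phi> (1, 0, 1, 1) - (\<Sum>k<n. sum \<psi> (level k))"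
proof (induction n)
  case (Suc n)
  have "sum \<phi> (level (Suc n)) = (\<Sum>M\<in>level n. \<phi> M - \<psi> M)"
    unfolding sum_level_Suc using assms level_subset_det_one_quads by (intro sum.cong) blast+
  with Suc.IH show ?case
    by (simp add: sum_subtractf)
qed simp

definition weight :: "quad \<Rightarrow> real" where
  "weight M = 1 / (real (row_inner M) * real (row_inner (left_child M))
                   * real (row_inner (right_child M)))"

definition inv_inner_sum :: "nat \<Rightarrow> real" where
  "inv_inner_sum n = (\<Sum>M\<in>level n. 1 / real (row_inner M))"

lemma weight_nonneg: "0 \<le> weight M"
  by (simp add: weight_def)

lemma inv_row_inner_telescope:
  assumes "M \<in> det_one_quads"
  shows "1 / real (row_inner (left_child M)) + 1 / real (row_inner (right_child M))
           = 1 / real (row_inner M) - weight M"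
proof -
  note row_inner_children_identity[OF assms]
  moreover have "0 < row_inner M" "0 < row_inner (left_child M)" "0 < row_inner (right_child M)"
    using row_inner_pos[OF assms] row_inner_lt_children[OF assms] by simp_all
  ultimately show ?thesis
    unfolding weight_def by (subst reciprocal_product_telescope) auto
qed

lemma arctan_inv_row_inner_telescope:
  assumes "M \<in> det_one_quads"
  shows "arctan (1 / real (row_inner (left_child M))) + arctan (1 / real (row_inner (right_child M)))
           = arctan (1 / real (row_inner M))"
proof -
  note row_inner_children_identity[OF assms]
  moreover have "1 < row_inner (left_child M)" "1 < row_inner (right_child M)"
    using row_inner_pos[OF assms] row_inner_lt_children[OF assms] by simp_all
  ultimately show ?thesis
    by (subst arctan_reciprocal_split) auto
qed

lemma sum_weight_levels: "(\<Sum>k<n. sum weight (level k)) = 1 - inv_inner_sum n"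
  using sum_level_telescope[of "\<lambda>M. 1 / real (row_inner M)" weight n] inv_row_inner_telescope
  unfolding inv_inner_sum_def by simp

lemma sum_level_arctan: "(\<Sum>M\<in>level n. arctan (1 / real (row_inner M))) = pi / 4"
  using sum_level_telescope[of "\<lambda>M. arctan (1 / real (row_inner M))" "\<lambda>_. 0" n]
    arctan_inv_row_inner_telescope by (simp add: arctan_one)

lemma inv_inner_sum_le_1: "inv_inner_sum n \<le> 1"
proof -
  have "0 \<le> (\<Sum>k<n. sum weight (level k))"
    by (intro sum_nonneg weight_nonneg)
  then show ?thesis
    using sum_weight_levels[of n] by simp
qed

lemma inv_inner_sum_bounds: "pi / 4 \<le> inv_inner_sum n" "inv_inner_sum n \<le> pi / 4 + 1 / (real n + 1)"
proof -
  define x where "x M = 1 / real (row_inner M)" for M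
  have x_bounds: "0 \<le> x M" "x M \<le> 1 / (real n + 1)" if "M \<in> level n" for M
    using row_inner_level[OF that] unfolding x_def by (auto simp: field_simps)
  have gap: "inv_inner_sum n - pi / 4 = (\<Sum>M\<in>level n. x M - arctan (x M))"
    unfolding inv_inner_sum_def sum_level_arctan[of n, symmetric] x_def by (simp add: sum_subtractf)
  have "0 \<le> (\<Sum>M\<in>level n. x M - arctan (x M))"
    using x_bounds arctan_le_self by (intro sum_nonneg) fastforce
  then show "pi / 4 \<le> inv_inner_sum n"
    using gap by simp
  have "(\<Sum>M\<in>level n. x M - arctan (x M)) \<le> (\<Sum>M\<in>level n. x M / (real n + 1))"
  proof (rule sum_mono)
    fix M assume M: "M \<in> level n"
    have "x M - arctan (x M) \<le> x M * x M"
      using diff_arctan_le_square x_bounds[OF M] by (simp add: power2_eq_square)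
    also have "\<dots> \<le> x M / (real n + 1)"
      using mult_left_mono[OF x_bounds(2) x_bounds(1)] M by (simp add: field_simps)
    finally show "x M - arctan (x M) \<le> x M / (real n + 1)" .
  qed
  also have "\<dots> = inv_inner_sum n / (real n + 1)"
    unfolding inv_inner_sum_def x_def by (simp add: sum_divide_distrib)
  also have "\<dots> \<le> 1 / (real n + 1)"
    using inv_inner_sum_le_1 by (simp add: divide_right_mono)
  finally show "inv_inner_sum n \<le> pi / 4 + 1 / (real n + 1)"
    using gap by simp
qed

lemma inv_inner_sum_tendsto: "inv_inner_sum \<longlonglongrightarrow> pi / 4"
proof (rule tendsto_sandwich[of "\<lambda>_. pi / 4" _ _ "\<lambda>n. pi / 4 + 1 / (real n + 1)"])
  have "(\<lambda>n. 1 / (real n + 1)) \<longlonglongrightarrow> 0"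
    using LIMSEQ_inverse_real_of_nat by (simp add: inverse_eq_divide add.commute)
  then show "(\<lambda>n. pi / 4 + 1 / (real n + 1)) \<longlonglongrightarrow> pi / 4"
    using tendsto_add[of "\<lambda>_. pi / 4" "pi / 4" sequentially] by fastforce
qed (use inv_inner_sum_bounds in auto)

lemma weight_level_sums: "(\<lambda>k. sum weight (level k)) sums (1 - pi / 4)"
  unfolding sums_def sum_weight_levels by (intro tendsto_intros inv_inner_sum_tendsto)

lemma has_sum_weight: "(weight has_sum (1 - pi / 4)) det_one_quads"
  unfolding det_one_quads_eq_Union_level
proof (rule has_sum_Union_disjoint_nonneg)
  show "disjoint_family level"
    using level_unique by (auto simp: disjoint_family_on_def)
qed (use finite_level weight_nonneg weight_level_sums in auto)

theorem theorem11:
  shows "((\<lambda>(a::nat, b::nat, c::nat, d::nat).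
            1 / (real (a * c + b * d) * real (a * (a + c) + b * (b + d))
                 * real ((a + c) * c + (b + d) * d)))
          has_sum (1 - pi / 4))
         {(a, b, c, d). b \<le> a \<and> d \<le> c \<and> int a * int d - int b * int c = 1}"
proof -
  have "(\<lambda>(a::nat, b::nat, c::nat, d::nat).
            1 / (real (a * c + b * d) * real (a * (a + c) + b * (b + d))
                 * real ((a + c) * c + (b + d) * d))) = weight"
    by (auto simp: weight_def)
  then show ?thesis
    using has_sum_weight unfolding det_one_quads_def by simp
qed

end
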